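(* Let $X,Y$ be Banach spaces, let $S$ be a subset of $X$ (with the induced metric), and let $f:S\to Y$ be a coarse homeomorphism that is coarse Lipschitz; let $g:Y\to S$ be a coarsely continuous map with $\sup_{x\in S}\|g(f(x))-x\|<\infty$ and $K:=\sup_{y\in Y}\|f(g(y))-y\|<\infty$. Then for all $0<t\le1$, $$\bar{\delta}_X\left(\frac{t}{56\,{\rm Lip}_\infty(f)\,c_\infty(f)}\right)\le\bar{\rho}_Y(t),$$ where $c_\infty(f)$ is computed with respect to the constant $K$.
   Context: All Banach spaces are real and infinite-dimensional; $B_X,S_X$ are the closed unit ball and sphere; $B_Z(z,r)$ is the closed ball of radius $r$ about $z$; for $A\subseteq Y$, $A^K:=\{y:\|y-a\|\le K\text{ for some }a\in A\}$. $\bar{\rho}_Y(t):=\sup_{y\in S_Y}\inf_{\dim(Y/Z)<\infty}\sup_{z\in S_Z}\|y+tz\|-1$ and $\bar{\delta}_X(t):=\inf_{x\in S_X}\sup_{\dim(X/Z)<\infty}\inf_{z\in S_Z}\|x+tz\|-1$ (over finite-codimensional subspaces $Z$). A map $h$ between metric spaces is coarsely continuous if $\omega_h(t):=\sup\{d(h(x),h(y)): d(x,y)\le t\}<\infty$ for all $t>0$. $f:S\to Y$ is a coarse homeomorphism if it is coarsely continuous and there is a coarsely continuous $g:Y\to S$ with $\sup_x\|g(f(x))-x\|<\infty$ and $\sup_y\|f(g(y))-y\|<\infty$; it is known that then $f$ is co-coarsely continuous with constant $K=\sup_y\|f(g(y))-y\|$, i.e. for every $d>K$ there is $\delta(d)>0$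 with $f(B_S(x,\delta))^K\supseteq B_Y(f(x),d)$ for all $x\in S$. ${\rm Lip}_s(f):=\sup\{\|f(x)-f(y)\|/\|x-y\|:\|x-y\|\ge s\}$, ${\rm Lip}_\infty(f):=\inf_{s>0}{\rm Lip}_s(f)$; $f$ is coarse Lipschitz if ${\rm Lip}_s(f)<\infty$ for some $s>0$. For $d>K$, $c_d$ is the infimum of all $c>0$ with $f(B_S(x,cr))^K\supseteq B_Y(f(x),r)$ for all $x\in S$, $r\ge d$, and $c_\infty(f):=\inf_{d>K}c_d=\lim_{d\to\infty}c_d$. *)

theory Defs
  imports "HOL-Analysis.Analysis" "HOL-Library.Extended_Real"
begin

definition infinite_dimensional :: "'a::real_vector itself \<Rightarrow> bool" where
  "infinite_dimensional TYPE('a) \<longleftrightarrow> (\<forall>B::'a set. finite B \<longrightarrow> span B \<noteq> UNIV)"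

definition fin_codim :: "'a::real_vector set \<Rightarrow> bool" where
  "fin_codim Z \<longleftrightarrow> subspace Z \<and> (\<exists>F. finite F \<and> span (Z \<union> F) = UNIV)"

definition rho_bar :: "'a::real_normed_vector itself \<Rightarrow> real \<Rightarrow> real" where
  "rho_bar TYPE('a) t =
     (SUP y\<in>sphere (0::'a) 1. INF Z\<in>{Z. fin_codim Z}. SUP z\<in>sphere 0 1 \<inter> Z. norm (y + t *\<^sub>R z)) - 1"

definition delta_bar :: "'a::real_normed_vector itself \<Rightarrow> real \<Rightarrow> real" where
  "delta_bar TYPE('a) t =
     (INF x\<in>sphere (0::'a) 1. SUP Z\<in>{Z. fin_codim Z}. INF z\<in>sphere 0 1 \<inter> Z. norm (x + t *\<^sub>R z)) - 1"

definition coarsely_continuous_on :: "'a::metric_space set \<Rightarrow> ('a \<Rightarrow> 'b::metric_space) \<Rightarrow> bool" where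
  "coarsely_continuous_on S h \<longleftrightarrow>
     (\<forall>t>0. bdd_above {dist (h x) (h y) |x y. x \<in> S \<and> y \<in> S \<and> dist x y \<le> t})"

definition Lip_s :: "'a::real_normed_vector set \<Rightarrow> ('a \<Rightarrow> 'b::real_normed_vector) \<Rightarrow> real \<Rightarrow> ereal" where
  "Lip_s S f s = Sup {ereal (norm (f x - f y) / norm (x - y)) |x y. x \<in> S \<and> y \<in> S \<and> norm (x - y) \<ge> s}"

definition Lip_inf :: "'a::real_normed_vector set \<Rightarrow> ('a \<Rightarrow> 'b::real_normed_vector) \<Rightarrow> ereal" where
  "Lip_inf S f = (INF s\<in>{0<..}. Lip_s S f s)"

definition coarse_Lipschitz_on :: "'a::real_normed_vector set \<Rightarrow> ('a \<Rightarrow> 'b::real_normed_vector) \<Rightarrow> bool" where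
  "coarse_Lipschitz_on S f \<longleftrightarrow> (\<exists>s>0. Lip_s S f s < \<infinity>)"

definition nbhd :: "'a::real_normed_vector set \<Rightarrow> real \<Rightarrow> 'a set" where
  "nbhd A K = {y. \<exists>a\<in>A. norm (y - a) \<le> K}"

definition c_d :: "'a::real_normed_vector set \<Rightarrow> ('a \<Rightarrow> 'b::real_normed_vector) \<Rightarrow> real \<Rightarrow> real \<Rightarrow> ereal" where
  "c_d S f K d = Inf {ereal c |c. c > 0 \<and>
      (\<forall>x\<in>S. \<forall>r\<ge>d. cball (f x) r \<subseteq> nbhd (f ` (S \<inter> cball x (c * r))) K)}"

definition c_inf :: "'a::real_normed_vector set \<Rightarrow> ('a \<Rightarrow> 'b::real_normed_vector) \<Rightarrow> real \<Rightarrow> ereal" where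
  "c_inf S f K = (INF d\<in>{K<..}. c_d S f K d)"

end

theory Submission
  imports Defs
begin

text \<open>
  Suppose \<open>rho_bar t < a_lo < a_hi < delta_bar \<tau>\<close>, and let \<open>L\<close> and \<open>c\<close> be slightly above
  \<open>Lip_inf S f\<close> and \<open>c_inf S f K\<close>, and \<open>c'\<close> slightly below.  Minimality of \<open>c_inf\<close> gives
  arbitrarily large bad balls: \<open>x \<in> S\<close> and \<open>y\<close> at distance \<open>r\<close> from \<open>f x\<close> such that no point
  of \<open>S\<close> within \<open>c' r\<close> of \<open>x\<close> is mapped \<open>K\<close>-close to \<open>y\<close>, while some \<open>w \<in> S\<close> within about
  \<open>c r\<close> of \<open>x\<close> is.  Asymptotic smoothness of \<open>Y\<close> provides arbitrarily many approximate midpoints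
  of \<open>f x\<close> and \<open>y\<close>, pairwise \<open>r t / 4\<close> apart; pulled back to \<open>S\<close> they lie within about
  \<open>c r (1 + a_lo) / 2\<close> of both \<open>x\<close> and \<open>w\<close>.  Bounded sets are totally bounded modulo a
  finite-codimensional subspace \<open>Z\<close>, so two of these preimages differ by some \<open>h \<in> Z\<close> up to an
  error \<open>1\<close>, and \<open>h\<close> is long by the Lipschitz bound.  Asymptotic uniform convexity of \<open>X\<close> in
  the direction \<open>x - w\<close> then gives \<open>norm (x - w - h) > c' r (1 + a_hi)\<close>, whereas the triangle
  inequality through the two preimages bounds it by about \<open>c r (1 + a_lo)\<close>.  For \<open>c, c'\<close>
  close enough to each other this fails at large \<open>r\<close>.
\<close>

section \<open>Distance to a subspace\<close>

text \<open>For a subspace \<open>E\<close>, \<open>infdist u E\<close> is the quotient seminorm of \<open>u\<close> in \<open>X/E\<close>.\<close>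

lemma infdist_ltE:
  assumes "A \<noteq> {}" "infdist x A < d"
  obtains a where "a \<in> A" "dist x a < d"
  using assms by (auto simp: infdist_notempty cINF_less_iff intro: bdd_belowI2[where m=0])

lemma infdist_subspace_add:
  fixes E :: "'a::real_normed_vector set"
  assumes "subspace E"
  shows "infdist (u + v) E \<le> infdist u E + infdist v E"
proof (rule field_le_epsilon)
  fix e :: real assume "0 < e"
  have ne: "E \<noteq> {}" using assms subspace_0 by auto
  obtain a where a: "a \<in> E" "dist u a < infdist u E + e/2"
    using infdist_ltE[OF ne, of u "infdist u E + e/2"] \<open>0 < e\<close> by auto
  obtain b where b: "b \<in> E" "dist v b < infdist v E + e/2"
    using infdist_ltE[OF ne, of v "infdist v E + e/2"] \<open>0 < e\<close> by auto
  have "infdist (u + v) E \<le> dist (u + v) (a + b)"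
    using a b assms by (intro infdist_le) (rule subspace_add)
  also have "\<dots> \<le> dist u a + dist v b"
    by (simp add: dist_norm) (metis add_diff_add norm_triangle_ineq)
  finally show "infdist (u + v) E \<le> infdist u E + infdist v E + e" using a b by linarith
qed

lemma infdist_subspace_scaleR_le:
  fixes E :: "'a::real_normed_vector set"
  assumes "subspace E"
  shows "infdist (c *\<^sub>R u) E \<le> \<bar>c\<bar> * infdist u E"
proof (cases "c = 0")
  case True
  then show ?thesis using assms by (simp add: subspace_0)
next
  case False
  have ne: "E \<noteq> {}" using assms subspace_0 by auto
  have "infdist (c *\<^sub>R u) E / \<bar>c\<bar> \<le> infdist u E"
    unfolding infdist_notempty[OF ne, of u]
  proof (rule cINF_greatest[OF ne])
    fix a assume "a \<in> E"
    then have "infdist (c *\<^sub>R u) E \<le> dist (c *\<^sub>R u) (c *\<^sub>R a)"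
      using assms by (intro infdist_le) (rule subspace_scale)
    also have "\<dots> = \<bar>c\<bar> * dist u a"
      by (simp add: dist_norm flip: scaleR_diff_right)
    finally show "infdist (c *\<^sub>R u) E / \<bar>c\<bar> \<le> dist u a"
      using False by (simp add: divide_le_eq mult.commute)
  qed
  then show ?thesis using False by (simp add: divide_le_eq mult.commute)
qed

lemma infdist_subspace_scaleR:
  fixes E :: "'a::real_normed_vector set"
  assumes "subspace E"
  shows "infdist (c *\<^sub>R u) E = \<bar>c\<bar> * infdist u E"
proof (cases "c = 0")
  case True
  then show ?thesis using assms by (simp add: subspace_0)
next
  case False
  have "infdist u E \<le> \<bar>inverse c\<bar> * infdist (c *\<^sub>R u) E"
    using infdist_subspace_scaleR_le[OF assms, of "inverse c" "c *\<^sub>R u"] False by simp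
  then have "\<bar>c\<bar> * infdist u E \<le> infdist (c *\<^sub>R u) E"
    using False by (simp add: field_simps)
  then show ?thesis using infdist_subspace_scaleR_le[OF assms, of c u] by linarith
qed

lemma infdist_subspace_diff:
  fixes E :: "'a::real_normed_vector set"
  assumes "subspace E"
  shows "infdist (u - v) E \<le> infdist u E + infdist v E"
  using infdist_subspace_add[OF assms, of u "-v"] infdist_subspace_scaleR[OF assms, of "-1" v]
  by simp

lemma infdist_subspace_add_member:
  fixes E :: "'a::real_normed_vector set"
  assumes "subspace E" "z \<in> E"
  shows "infdist (u + z) E = infdist u E"
  using infdist_subspace_add[OF assms(1), of u z] infdist_subspace_diff[OF assms(1), of "u + z" z] assms
  by simp

lemma infdist_subspace_le_norm:
  fixes E :: "'a::real_normed_vector set"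
  assumes "subspace E"
  shows "infdist u E \<le> norm u"
  using infdist_le[OF subspace_0[OF assms], of u] by (simp add: dist_norm)

lemma infdist_subspace_coefficient:
  fixes E :: "'a::real_normed_vector set"
  assumes "subspace E" "y - k *\<^sub>R a \<in> E"
  shows "infdist y E = \<bar>k\<bar> * infdist a E"
  using infdist_subspace_add_member[OF assms, of "k *\<^sub>R a"] infdist_subspace_scaleR[OF assms(1)]
  by simp

section \<open>Finite spans and finite codimension\<close>

lemma Cauchy_coefficients_modulo_subspace:
  fixes E :: "'a::real_normed_vector set"
  assumes E: "subspace E" and a: "0 < infdist a E" and "Cauchy x"
    and k: "\<And>n. x n - k n *\<^sub>R a \<in> E"
  shows "Cauchy k"
proof (rule metric_CauchyI)
  fix e :: real assume "0 < e"
  obtain M where M: "\<And>m n. M \<le> m \<Longrightarrow> M \<le> n \<Longrightarrow> dist (x m) (x n) < e * infdist a E"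
    using metric_CauchyD[OF \<open>Cauchy x\<close>, of "e * infdist a E"] \<open>0 < e\<close> a by auto
  have "dist (k m) (k n) < e" if "M \<le> m" "M \<le> n" for m n
  proof -
    have "x m - x n - (k m - k n) *\<^sub>R a = (x m - k m *\<^sub>R a) - (x n - k n *\<^sub>R a)"
      by (simp add: algebra_simps)
    then have "x m - x n - (k m - k n) *\<^sub>R a \<in> E" using subspace_diff[OF E k k] by metis
    then have "\<bar>k m - k n\<bar> * infdist a E = infdist (x m - x n) E"
      by (simp add: infdist_subspace_coefficient[OF E])
    also have "\<dots> < e * infdist a E"
      using infdist_subspace_le_norm[OF E, of "x m - x n"] M[OF that] by (simp add: dist_norm)
    finally show ?thesis using a by (simp add: dist_real_def)
  qed
  then show "\<exists>M. \<forall>m\<ge>M. \<forall>n\<ge>M. dist (k m) (k n) < e" by blast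
qed

lemma closed_span_insert:
  fixes a :: "'a::real_normed_vector"
  assumes closed: "closed (span P)"
  shows "closed (span (insert a P))"
proof (cases "a \<in> span P")
  case True
  then show ?thesis using closed by (simp add: span_redundant)
next
  case False
  have a: "0 < infdist a (span P)"
    using infdist_pos_not_in_closed[OF closed _ False] span_zero by (metis empty_iff)
  show ?thesis unfolding closed_sequential_limits
  proof (intro allI impI, elim conjE)
    fix x l assume "\<forall>n. x n \<in> span (insert a P)" and lim: "x \<longlonglongrightarrow> l"
    then have "\<forall>n. \<exists>c. x n - c *\<^sub>R a \<in> span P" by (simp add: span_insert)
    then obtain k where k: "\<And>n. x n - k n *\<^sub>R a \<in> span P" by metis
    have "Cauchy k"
      using Cauchy_coefficients_modulo_subspace[OF subspace_span a LIMSEQ_imp_Cauchy[OF lim] k] .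
    then obtain \<kappa> where "k \<longlonglongrightarrow> \<kappa>" by (auto simp: Cauchy_convergent_iff convergent_def)
    then have "(\<lambda>n. x n - k n *\<^sub>R a) \<longlonglongrightarrow> l - \<kappa> *\<^sub>R a"
      using lim by (intro tendsto_intros)
    then have "l - \<kappa> *\<^sub>R a \<in> span P"
      using closed_sequentially[where f = "\<lambda>n. x n - k n *\<^sub>R a", OF closed k] by blast
    then show "l \<in> span (insert a P)" unfolding span_insert by blast
  qed
qed

lemma closed_span_finite:
  fixes P :: "'a::real_normed_vector set"
  assumes "finite P"
  shows "closed (span P)"
  using assms by (induction P rule: finite_induct) (simp_all add: closed_span_insert)

lemma Riesz_lemma_finite_span:
  fixes W :: "'a::real_normed_vector set"
  assumes W: "subspace W" and P: "finite P" "P \<subseteq> W" and not_sub: "\<not> W \<subseteq> span P"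
  obtains w where "w \<in> W" "norm w = 1" "\<And>p. p \<in> P \<Longrightarrow> 1/2 \<le> norm (w - p)"
proof -
  let ?E = "span P"
  have closed: "closed ?E" using closed_span_finite[OF P(1)] .
  have EW: "?E \<subseteq> W" using span_minimal[OF P(2) W] .
  obtain w0 where w0: "w0 \<in> W" "w0 \<notin> ?E" using not_sub by auto
  define d where "d = infdist w0 ?E"
  have d: "0 < d"
    unfolding d_def using infdist_pos_not_in_closed[OF closed _ w0(2)] span_zero by (metis empty_iff)
  obtain e where e: "e \<in> ?E" "dist w0 e < 2 * d"
    using infdist_ltE[of ?E w0 "2 * d"] d span_zero unfolding d_def
    by (metis empty_iff less_add_same_cancel1 mult_2)
  define v where "v = w0 - e"
  have v: "v \<in> W" unfolding v_def using w0 e EW subspace_diff[OF W] by blast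
  have infdist_v: "infdist v ?E = d"
    unfolding v_def d_def using infdist_subspace_add_member[of ?E "- e" w0] e by (simp add: span_neg)
  have norm_v: "d \<le> norm v" "norm v < 2 * d"
    using infdist_subspace_le_norm[of ?E v] infdist_v e(2) by (simp_all add: v_def dist_norm)
  have v_pos: "0 < norm v" using norm_v(1) d by linarith
  define w where "w = inverse (norm v) *\<^sub>R v"
  show thesis
  proof
    show "w \<in> W" unfolding w_def using v subspace_scale[OF W] by blast
    show "norm w = 1" unfolding w_def using v_pos by simp
    fix p assume "p \<in> P"
    then have "infdist w ?E \<le> norm (w - p)"
      using infdist_le[of p ?E w] span_base[of p P] by (simp add: dist_norm)
    moreover have "infdist w ?E = d / norm v"
      unfolding w_def using infdist_subspace_scaleR[of ?E "inverse (norm v)" v] infdist_v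
      by (simp add: field_simps)
    moreover have "1/2 < d / norm v" using norm_v v_pos by (simp add: field_simps)
    ultimately show "1/2 \<le> norm (w - p)" by linarith
  qed
qed

lemma exists_separated_unit_vectors:
  fixes W :: "'a::real_normed_vector set"
  assumes W: "subspace W" and not_sub: "\<And>P. finite P \<Longrightarrow> \<not> W \<subseteq> span P"
  shows "\<exists>P. finite P \<and> card P = n \<and> P \<subseteq> W \<inter> sphere 0 1 \<and>
             (\<forall>p\<in>P. \<forall>q\<in>P. p \<noteq> q \<longrightarrow> 1/2 \<le> norm (p - q))"
proof (induction n)
  case 0
  show ?case by (intro exI[of _ "{}"]) simp
next
  case (Suc n)
  then obtain P where P: "finite P" "card P = n" "P \<subseteq> W \<inter> sphere 0 1"
    and sep: "\<forall>p\<in>P. \<forall>q\<in>P. p \<noteq> q \<longrightarrow> 1/2 \<le> norm (p - q)"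
    by (elim exE conjE)
  have "P \<subseteq> W" using P(3) by blast
  obtain w where w: "w \<in> W" "norm w = 1" and far: "\<And>p. p \<in> P \<Longrightarrow> 1/2 \<le> norm (w - p)"
    using Riesz_lemma_finite_span[OF W P(1) \<open>P \<subseteq> W\<close> not_sub[OF P(1)]] by metis
  have "w \<notin> P" using far[of w] by force
  have far': "1/2 \<le> norm (p - w)" if "p \<in> P" for p
    using far[OF that] by (simp add: norm_minus_commute)
  have "finite (insert w P)" "card (insert w P) = Suc n" "insert w P \<subseteq> W \<inter> sphere 0 1"
    using P w \<open>w \<notin> P\<close> by auto
  moreover have "\<forall>p\<in>insert w P. \<forall>q\<in>insert w P. p \<noteq> q \<longrightarrow> 1/2 \<le> norm (p - q)"
  proof (intro ballI impI)
    fix p q assume "p \<in> insert w P" "q \<in> insert w P" "p \<noteq> q"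
    then show "1/2 \<le> norm (p - q)"
      using sep far far' by (cases "p = w"; cases "q = w") auto
  qed
  ultimately show ?case by (intro exI[of _ "insert w P"]) simp
qed

lemma fin_codim_UNIV: "fin_codim (UNIV :: 'a::real_vector set)"
  unfolding fin_codim_def by (intro conjI exI[of _ "{}"]) auto

lemma fin_codim_subspace: "fin_codim Z \<Longrightarrow> subspace Z"
  by (simp add: fin_codim_def)

lemma fin_codim_not_subset_finite_span:
  fixes Z :: "'a::real_vector set"
  assumes "infinite_dimensional TYPE('a)" "fin_codim Z" "finite P"
  shows "\<not> Z \<subseteq> span P"
proof
  assume "Z \<subseteq> span P"
  obtain F where F: "finite F" "span (Z \<union> F) = UNIV" using assms(2) unfolding fin_codim_def by blast
  have "Z \<union> F \<subseteq> span (P \<union> F)"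
    using \<open>Z \<subseteq> span P\<close> span_mono[of P "P \<union> F"] by (auto intro: span_base)
  then have "span (Z \<union> F) \<subseteq> span (P \<union> F)" by (rule span_minimal) simp
  moreover have "span (P \<union> F) \<noteq> UNIV"
    using assms(1) assms(3) F(1) unfolding infinite_dimensional_def by simp
  ultimately show False using F(2) by auto
qed

lemma fin_codim_obtain_unit:
  fixes Z :: "'a::real_normed_vector set"
  assumes "infinite_dimensional TYPE('a)" "fin_codim Z"
  obtains z where "z \<in> Z" "norm z = 1"
proof -
  obtain z0 where z0: "z0 \<in> Z" "z0 \<noteq> 0"
    using fin_codim_not_subset_finite_span[OF assms, of "{}"] by auto
  have "inverse (norm z0) *\<^sub>R z0 \<in> Z" using subspace_scale[OF fin_codim_subspace[OF assms(2)] z0(1)] .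
  then show thesis using that z0(2) by simp
qed

lemma fin_codim_separated_unit_vectors:
  fixes W :: "'a::real_normed_vector set"
  assumes "infinite_dimensional TYPE('a)" "fin_codim W"
  obtains P where "finite P" "card P = n" "P \<subseteq> W \<inter> sphere 0 1"
    "\<forall>p\<in>P. \<forall>q\<in>P. p \<noteq> q \<longrightarrow> 1/2 \<le> norm (p - q)"
proof -
  have "subspace W" by (rule fin_codim_subspace[OF assms(2)])
  moreover have "\<And>P. finite P \<Longrightarrow> \<not> W \<subseteq> span P"
    by (rule fin_codim_not_subset_finite_span[OF assms])
  ultimately have "\<exists>P. finite P \<and> card P = n \<and> P \<subseteq> W \<inter> sphere 0 1 \<and>
      (\<forall>p\<in>P. \<forall>q\<in>P. p \<noteq> q \<longrightarrow> 1/2 \<le> norm (p - q))"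
    by (rule exists_separated_unit_vectors)
  then show thesis using that by (elim exE conjE) metis
qed

definition totally_bounded_modulo :: "'a::real_normed_vector set \<Rightarrow> 'a set \<Rightarrow> bool" where
  "totally_bounded_modulo Z A \<longleftrightarrow>
     (\<forall>e>0. \<exists>C. finite C \<and> (\<forall>x\<in>A. \<exists>c\<in>C. infdist (x - c) Z < e))"

lemma totally_bounded_modulo_UNIV: "totally_bounded_modulo UNIV A"
  unfolding totally_bounded_modulo_def by (intro allI impI exI[of _ "{0}"]) simp

lemma finite_net_modulo_line:
  fixes Z :: "'a::real_normed_vector set"
  assumes Z: "subspace Z" and "0 < e"
  obtains C where "finite C" "\<And>k. \<bar>k\<bar> * infdist a Z \<le> B \<Longrightarrow> \<exists>c\<in>C. infdist (k *\<^sub>R a - c) Z < e"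
proof (cases "infdist a Z = 0")
  case True
  show thesis
    by (rule that[of "{0}"]) (use True \<open>0 < e\<close> infdist_subspace_scaleR[OF Z] in auto)
next
  case False
  then have \<delta>: "0 < infdist a Z" using infdist_nonneg[of a Z] by linarith
  let ?T = "(\<lambda>k. k *\<^sub>R a) ` {- (B / infdist a Z) .. B / infdist a Z}"
  have "compact ?T" by (intro compact_continuous_image continuous_intros) simp
  then obtain C where C: "finite C" "?T \<subseteq> (\<Union>c\<in>C. ball c e)"
    using seq_compact_imp_totally_bounded[OF compact_imp_seq_compact] \<open>0 < e\<close> by metis
  show thesis
  proof (rule that[OF C(1)])
    fix k assume "\<bar>k\<bar> * infdist a Z \<le> B"
    then have "\<bar>k\<bar> \<le> B / infdist a Z" using \<delta> by (simp add: pos_le_divide_eq)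
    then have "k *\<^sub>R a \<in> ?T" by (intro imageI) (simp add: abs_le_iff)
    then obtain c where c: "c \<in> C" "dist c (k *\<^sub>R a) < e" using C(2) by auto
    have "infdist (k *\<^sub>R a - c) Z \<le> norm (k *\<^sub>R a - c)" by (rule infdist_subspace_le_norm[OF Z])
    then show "\<exists>c\<in>C. infdist (k *\<^sub>R a - c) Z < e"
      using c by (metis dist_norm norm_minus_commute order_le_less_trans)
  qed
qed

lemma totally_bounded_modulo_span_insert:
  fixes Z :: "'a::real_normed_vector set"
  assumes Z: "subspace Z" and "bounded A"
    and tb: "totally_bounded_modulo (span (insert a Z)) A"
  shows "totally_bounded_modulo Z A"
  unfolding totally_bounded_modulo_def
proof (intro allI impI)
  fix e :: real assume "0 < e"
  then have e2: "0 < e/2" by simp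
  obtain C' where C': "finite C'" "\<And>x. x \<in> A \<Longrightarrow> \<exists>c\<in>C'. infdist (x - c) (span (insert a Z)) < e/2"
    using tb e2 unfolding totally_bounded_modulo_def by metis
  obtain B where B: "\<And>x. x \<in> A \<Longrightarrow> norm x \<le> B" using \<open>bounded A\<close> unfolding bounded_iff by metis
  obtain B' where B': "\<And>c. c \<in> C' \<Longrightarrow> norm c \<le> B'"
    using finite_imp_bounded[OF C'(1)] unfolding bounded_iff by metis
  obtain C0 where C0: "finite C0"
    "\<And>k. \<bar>k\<bar> * infdist a Z \<le> B + B' + e/2 \<Longrightarrow> \<exists>c\<in>C0. infdist (k *\<^sub>R a - c) Z < e/2"
    using finite_net_modulo_line[OF Z e2] by metis
  have "\<exists>c\<in>(\<lambda>(c', c0). c' + c0) ` (C' \<times> C0). infdist (x - c) Z < e" if x: "x \<in> A" for x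
  proof -
    obtain c' where c': "c' \<in> C'" "infdist (x - c') (span (insert a Z)) < e/2" using C'(2)[OF x] by blast
    obtain y where y: "y \<in> span (insert a Z)" "dist (x - c') y < e/2"
      using infdist_ltE[OF _ c'(2)] span_zero by (metis empty_iff)
    obtain k where k: "y - k *\<^sub>R a \<in> Z"
      using y(1) unfolding span_insert span_eq_iff[THEN iffD2, OF Z] by blast
    have "\<bar>k\<bar> * infdist a Z = infdist y Z" using infdist_subspace_coefficient[OF Z k] by simp
    also have "\<dots> \<le> norm y" by (rule infdist_subspace_le_norm[OF Z])
    also have "\<dots> \<le> norm x + norm c' + e/2"
      using y(2) norm_triangle_ineq4[of x c'] norm_triangle_ineq3[of y "x - c'"]
      by (simp add: dist_norm norm_minus_commute)
    finally have "\<bar>k\<bar> * infdist a Z \<le> B + B' + e/2" using B[OF x] B'[OF c'(1)] by linarith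
    then obtain c0 where c0: "c0 \<in> C0" "infdist (k *\<^sub>R a - c0) Z < e/2" using C0(2) by blast
    have "infdist (x - (c' + c0)) Z \<le> infdist (x - c' - y) Z + infdist (y - c0) Z"
      using infdist_subspace_add[OF Z, of "x - c' - y" "y - c0"] by (simp add: algebra_simps)
    also have "infdist (y - c0) Z = infdist (k *\<^sub>R a - c0) Z"
      using infdist_subspace_add_member[OF Z k, of "k *\<^sub>R a - c0"] by (simp add: algebra_simps)
    also have "infdist (x - c' - y) Z \<le> norm (x - c' - y)" by (rule infdist_subspace_le_norm[OF Z])
    finally have "infdist (x - (c' + c0)) Z < e" using y(2) c0(2) by (simp add: dist_norm)
    then show ?thesis using c'(1) c0(1) by force
  qed
  moreover have "finite ((\<lambda>(c', c0). c' + c0) ` (C' \<times> C0))" using C'(1) C0(1) by simp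
  ultimately show "\<exists>C. finite C \<and> (\<forall>x\<in>A. \<exists>c\<in>C. infdist (x - c) Z < e)" by blast
qed

lemma fin_codim_totally_bounded_modulo:
  fixes Z :: "'a::real_normed_vector set"
  assumes "fin_codim Z" "bounded A"
  shows "totally_bounded_modulo Z A"
proof -
  obtain F where F: "finite F" "span (Z \<union> F) = UNIV" "subspace Z"
    using assms(1) unfolding fin_codim_def by blast
  from F show ?thesis
  proof (induction F arbitrary: Z rule: finite_induct)
    case empty
    then show ?case using span_eq_iff[of Z] totally_bounded_modulo_UNIV by simp
  next
    case (insert a F)
    have "span (span (insert a Z) \<union> F) = span (insert a Z \<union> F)"
      unfolding span_Un[of "span (insert a Z)"] span_Un[of "insert a Z"] span_span ..
    also have "insert a Z \<union> F = Z \<union> insert a F" by auto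
    finally have "span (span (insert a Z) \<union> F) = UNIV" using insert.prems(1) by simp
    then have "totally_bounded_modulo (span (insert a Z)) A"
      using insert.IH by simp
    then show ?case by (rule totally_bounded_modulo_span_insert[OF insert.prems(2) assms(2)])
  qed
qed

lemma fin_codim_pigeonhole:
  fixes Z :: "'a::real_normed_vector set"
  assumes "fin_codim Z" "bounded A" "0 < e"
  obtains N where "\<And>P q. finite P \<Longrightarrow> N < card P \<Longrightarrow> q ` P \<subseteq> A \<Longrightarrow>
      \<exists>p1\<in>P. \<exists>p2\<in>P. p1 \<noteq> p2 \<and> infdist (q p1 - q p2) Z < e"
proof -
  have Z: "subspace Z" by (rule fin_codim_subspace[OF assms(1)])
  have "0 < e/2" using \<open>0 < e\<close> by simp
  then obtain C where C: "finite C" "\<And>x. x \<in> A \<Longrightarrow> \<exists>c\<in>C. infdist (x - c) Z < e/2"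
    using fin_codim_totally_bounded_modulo[OF assms(1,2)]
    unfolding totally_bounded_modulo_def by metis
  show thesis
  proof (rule that[of "card C"])
    fix P and q :: "'b \<Rightarrow> 'a"
    assume P: "finite P" "card C < card P" "q ` P \<subseteq> A"
    have "\<forall>p\<in>P. \<exists>c\<in>C. infdist (q p - c) Z < e/2" using C(2) P(3) by auto
    then obtain c where c: "\<And>p. p \<in> P \<Longrightarrow> c p \<in> C \<and> infdist (q p - c p) Z < e/2"
      by metis
    have "c ` P \<subseteq> C" using c by auto
    then have "\<not> inj_on c P"
      using card_inj_on_le[of c P C] C(1) P(2) by linarith
    then obtain p1 p2 where p: "p1 \<in> P" "p2 \<in> P" "p1 \<noteq> p2" "c p1 = c p2"
      unfolding inj_on_def by blast
    have "infdist (q p1 - q p2) Z \<le> infdist (q p1 - c p1) Z + infdist (q p2 - c p2) Z"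
      using infdist_subspace_diff[OF Z, of "q p1 - c p1" "q p2 - c p2"] p(4) by simp
    then show "\<exists>p1\<in>P. \<exists>p2\<in>P. p1 \<noteq> p2 \<and> infdist (q p1 - q p2) Z < e"
      using c[OF p(1)] c[OF p(2)] p(1-3) by force
  qed
qed

section \<open>Asymptotic moduli\<close>

lemma norm_add_scaleR_unit_le:
  fixes y z :: "'a::real_normed_vector"
  assumes "norm z = 1"
  shows "norm (y + t *\<^sub>R z) \<le> norm y + \<bar>t\<bar>"
  using norm_triangle_ineq[of y "t *\<^sub>R z"] assms by simp

lemma delta_bar_witness:
  fixes u :: "'a::real_normed_vector"
  assumes inf: "infinite_dimensional TYPE('a)" and u: "norm u = 1"
    and less: "a < delta_bar TYPE('a) \<tau>"
  obtains Z where "fin_codim Z" "\<And>z. z \<in> Z \<Longrightarrow> norm z = 1 \<Longrightarrow> 1 + a < norm (u + \<tau> *\<^sub>R z)"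
proof -
  define H where "H x Z = (INF z\<in>sphere 0 1 \<inter> Z. norm (x + \<tau> *\<^sub>R z))" for x :: 'a and Z
  have bdd_norms: "bdd_below ((\<lambda>z. norm (x + \<tau> *\<^sub>R z)) ` A)" for x :: 'a and A
    by (rule bdd_belowI[where m=0]) auto
  have H_bounds: "0 \<le> H x Z \<and> H x Z \<le> norm x + \<bar>\<tau>\<bar>" if Z: "fin_codim Z" for x Z
  proof -
    obtain z0 where z0: "z0 \<in> Z" "norm z0 = 1" using fin_codim_obtain_unit[OF inf Z] by metis
    have "H x Z \<le> norm (x + \<tau> *\<^sub>R z0)"
      unfolding H_def by (rule cINF_lower[OF bdd_norms]) (use z0 in simp)
    also have "\<dots> \<le> norm x + \<bar>\<tau>\<bar>" by (rule norm_add_scaleR_unit_le[OF z0(2)])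
    finally show ?thesis
      unfolding H_def using z0 by (auto intro!: cINF_greatest)
  qed
  have bdd_H: "bdd_above ((\<lambda>Z. H x Z) ` {Z. fin_codim Z})" for x
    by (rule bdd_aboveI[where M = "norm x + \<bar>\<tau>\<bar>"]) (use H_bounds in auto)
  have "delta_bar TYPE('a) \<tau> + 1 \<le> (SUP Z\<in>{Z. fin_codim Z}. H u Z)"
  proof -
    have "bdd_below ((\<lambda>x. SUP Z\<in>{Z. fin_codim Z}. H x Z) ` sphere 0 1)"
      using H_bounds fin_codim_UNIV
      by (intro bdd_belowI[where m=0] ) (force intro: order_trans[OF _ cSUP_upper[OF _ bdd_H]])
    then have "(INF x\<in>sphere 0 1. SUP Z\<in>{Z. fin_codim Z}. H x Z) \<le> (SUP Z\<in>{Z. fin_codim Z}. H u Z)"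
      by (rule cINF_lower) (use u in simp)
    then show ?thesis unfolding delta_bar_def H_def by simp
  qed
  then have "1 + a < (SUP Z\<in>{Z. fin_codim Z}. H u Z)" using less by linarith
  moreover have "{Z. fin_codim Z} \<noteq> {}" using fin_codim_UNIV by blast
  ultimately obtain Z where Z: "fin_codim Z" "1 + a < H u Z"
    using less_cSUP_iff[OF _ bdd_H] by (metis mem_Collect_eq)
  show thesis
  proof (rule that[OF Z(1)])
    fix z assume "z \<in> Z" "norm z = 1"
    then have "H u Z \<le> norm (u + \<tau> *\<^sub>R z)" unfolding H_def by (intro cINF_lower[OF bdd_norms]) simp
    then show "1 + a < norm (u + \<tau> *\<^sub>R z)" using Z(2) by linarith
  qed
qed

lemma rho_bar_witness:
  fixes v :: "'a::real_normed_vector"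
  assumes inf: "infinite_dimensional TYPE('a)" and v: "norm v = 1"
    and less: "rho_bar TYPE('a) t < a"
  obtains W where "fin_codim W" "\<And>w. w \<in> W \<Longrightarrow> norm w = 1 \<Longrightarrow> norm (v + t *\<^sub>R w) < 1 + a"
proof -
  define H where "H y W = (SUP w\<in>sphere 0 1 \<inter> W. norm (y + t *\<^sub>R w))" for y :: 'a and W
  have bdd_norms: "bdd_above ((\<lambda>w. norm (y + t *\<^sub>R w)) ` (sphere 0 1 \<inter> W))" for y :: 'a and W
    by (rule bdd_aboveI[where M = "norm y + \<bar>t\<bar>"]) (auto intro: norm_add_scaleR_unit_le)
  have H_bounds: "0 \<le> H y W \<and> H y W \<le> norm y + \<bar>t\<bar>" if W: "fin_codim W" for y W
  proof -
    obtain w0 where w0: "w0 \<in> W" "norm w0 = 1" using fin_codim_obtain_unit[OF inf W] by metis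
    have "norm (y + t *\<^sub>R w0) \<le> H y W"
      unfolding H_def by (rule cSUP_upper[OF _ bdd_norms]) (use w0 in simp)
    moreover have "H y W \<le> norm y + \<bar>t\<bar>"
      unfolding H_def using w0 by (intro cSUP_least) (auto intro: norm_add_scaleR_unit_le)
    ultimately show ?thesis using norm_ge_zero[of "y + t *\<^sub>R w0"] by linarith
  qed
  have bdd_H: "bdd_below ((\<lambda>W. H y W) ` {W. fin_codim W})" for y
    by (rule bdd_belowI[where m=0]) (use H_bounds in auto)
  have "(INF W\<in>{W. fin_codim W}. H v W) \<le> rho_bar TYPE('a) t + 1"
  proof -
    have G_le: "(INF W\<in>{W. fin_codim W}. H y W) \<le> norm y + \<bar>t\<bar>" for y
      using cINF_lower[OF bdd_H, of UNIV y] H_bounds[OF fin_codim_UNIV, of y] fin_codim_UNIV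
      by force
    have "bdd_above ((\<lambda>y. INF W\<in>{W. fin_codim W}. H y W) ` sphere 0 1)"
    proof (rule bdd_aboveI[where M = "1 + \<bar>t\<bar>"])
      fix x assume "x \<in> (\<lambda>y. INF W\<in>{W. fin_codim W}. H y W) ` sphere 0 1"
      then obtain y :: 'a where "norm y = 1" "x = (INF W\<in>{W. fin_codim W}. H y W)" by auto
      then show "x \<le> 1 + \<bar>t\<bar>" using G_le[of y] by simp
    qed
    then have "(INF W\<in>{W. fin_codim W}. H v W) \<le> (SUP y\<in>sphere 0 1. INF W\<in>{W. fin_codim W}. H y W)"
      by (rule cSUP_upper[rotated]) (use v in simp)
    then show ?thesis unfolding rho_bar_def H_def by simp
  qed
  then have "(INF W\<in>{W. fin_codim W}. H v W) < 1 + a" using less by linarith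
  moreover have "{W. fin_codim W} \<noteq> {}" using fin_codim_UNIV by blast
  ultimately obtain W where W: "fin_codim W" "H v W < 1 + a"
    using cINF_less_iff[OF _ bdd_H] by (metis mem_Collect_eq)
  show thesis
  proof (rule that[OF W(1)])
    fix w assume "w \<in> W" "norm w = 1"
    then have "norm (v + t *\<^sub>R w) \<le> H v W" unfolding H_def by (intro cSUP_upper[OF _ bdd_norms]) simp
    then show "norm (v + t *\<^sub>R w) < 1 + a" using W(2) by linarith
  qed
qed

lemma rho_bar_nonneg:
  assumes inf: "infinite_dimensional TYPE('a::real_normed_vector)"
  shows "0 \<le> rho_bar TYPE('a) t"
proof (rule ccontr)
  assume "\<not> 0 \<le> rho_bar TYPE('a) t"
  obtain v :: 'a where v: "norm v = 1" using fin_codim_obtain_unit[OF inf fin_codim_UNIV] by metis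
  obtain W where W: "fin_codim W" "\<And>w. w \<in> W \<Longrightarrow> norm w = 1 \<Longrightarrow> norm (v + t *\<^sub>R w) < 1 + 0"
    using rho_bar_witness[OF inf v] \<open>\<not> 0 \<le> rho_bar TYPE('a) t\<close> by (metis not_le)
  obtain w where w: "w \<in> W" "norm w = 1" using fin_codim_obtain_unit[OF inf W(1)] by metis
  have "- w \<in> W" using subspace_neg[OF fin_codim_subspace[OF W(1)] w(1)] .
  then have "norm (v - t *\<^sub>R w) < 1" using W(2)[of "- w"] w(2) by simp
  moreover have "norm (v + t *\<^sub>R w) < 1" using W(2) w by simp
  moreover have "2 \<le> norm (v + t *\<^sub>R w) + norm (v - t *\<^sub>R w)"
    using norm_triangle_ineq[of "v + t *\<^sub>R w" "v - t *\<^sub>R w"] v by (simp flip: scaleR_2)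
  ultimately show False by linarith
qed

lemma delta_bar_zero_nonpos:
  assumes inf: "infinite_dimensional TYPE('a::real_normed_vector)"
  shows "delta_bar TYPE('a) 0 \<le> 0"
proof (rule ccontr)
  assume "\<not> delta_bar TYPE('a) 0 \<le> 0"
  obtain u :: 'a where u: "norm u = 1" using fin_codim_obtain_unit[OF inf fin_codim_UNIV] by metis
  obtain Z where Z: "fin_codim Z" "\<And>z. z \<in> Z \<Longrightarrow> norm z = 1 \<Longrightarrow> 1 + 0 < norm (u + 0 *\<^sub>R z)"
    using delta_bar_witness[OF inf u] \<open>\<not> delta_bar TYPE('a) 0 \<le> 0\<close> by (metis not_le)
  obtain z where "z \<in> Z" "norm z = 1" using fin_codim_obtain_unit[OF inf Z(1)] by metis
  then show False using Z(2) u by fastforce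
qed

lemma norm_add_scaleR_gt_mono:
  fixes u z :: "'a::real_normed_vector"
  assumes "norm u = 1" "0 < \<tau>" "\<tau> \<le> \<sigma>" "0 \<le> a" "1 + a < norm (u + \<tau> *\<^sub>R z)"
  shows "1 + a < norm (u + \<sigma> *\<^sub>R z)"
proof (rule ccontr)
  assume le: "\<not> 1 + a < norm (u + \<sigma> *\<^sub>R z)"
  define \<theta> where "\<theta> = \<tau> / \<sigma>"
  have \<theta>: "0 < \<theta>" "\<theta> \<le> 1" using assms unfolding \<theta>_def by auto
  have "u + \<tau> *\<^sub>R z = (1 - \<theta>) *\<^sub>R u + \<theta> *\<^sub>R (u + \<sigma> *\<^sub>R z)"
    using assms unfolding \<theta>_def by (simp add: algebra_simps)
  then have "norm (u + \<tau> *\<^sub>R z) \<le> (1 - \<theta>) + \<theta> * norm (u + \<sigma> *\<^sub>R z)"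
    using norm_triangle_ineq[of "(1 - \<theta>) *\<^sub>R u" "\<theta> *\<^sub>R (u + \<sigma> *\<^sub>R z)"] \<theta> assms(1) by simp
  also have "\<dots> \<le> (1 - \<theta>) + \<theta> * (1 + a)"
    using le \<theta> by (intro add_left_mono mult_left_mono) auto
  also have "\<dots> \<le> 1 + a"
    using mult_right_mono[OF \<theta>(2) assms(4)] by (simp add: algebra_simps)
  finally show False using assms(5) by simp
qed

lemma delta_bar_far_translates:
  fixes x :: "'a::real_normed_vector"
  assumes inf: "infinite_dimensional TYPE('a)" and less: "a < delta_bar TYPE('a) \<tau>"
    and "0 \<le> a" "0 < \<tau>" "x \<noteq> 0"
  obtains Z where "fin_codim Z"
    "\<And>h. h \<in> Z \<Longrightarrow> \<tau> * norm x \<le> norm h \<Longrightarrow> norm x * (1 + a) < norm (x - h)"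
proof -
  define u where "u = inverse (norm x) *\<^sub>R x"
  have u: "norm u = 1" using \<open>x \<noteq> 0\<close> by (simp add: u_def)
  obtain Z where Z: "fin_codim Z" "\<And>z. z \<in> Z \<Longrightarrow> norm z = 1 \<Longrightarrow> 1 + a < norm (u + \<tau> *\<^sub>R z)"
    using delta_bar_witness[OF inf u less] by metis
  show thesis
  proof (rule that[OF Z(1)])
    fix h assume h: "h \<in> Z" "\<tau> * norm x \<le> norm h"
    have "0 < norm h" using h(2) \<open>0 < \<tau>\<close> \<open>x \<noteq> 0\<close> by (smt (verit) mult_pos_pos zero_less_norm_iff)
    define z where "z = - inverse (norm h) *\<^sub>R h"
    have "z \<in> Z"
      unfolding z_def using fin_codim_subspace[OF Z(1)] h(1) by (simp add: subspace_neg subspace_scale)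
    moreover have "norm z = 1" unfolding z_def using \<open>0 < norm h\<close> by simp
    ultimately have "1 + a < norm (u + (norm h / norm x) *\<^sub>R z)"
      using norm_add_scaleR_gt_mono[OF u \<open>0 < \<tau>\<close> _ \<open>0 \<le> a\<close> Z(2)] h(2) \<open>x \<noteq> 0\<close>
      by (simp add: pos_le_divide_eq mult.commute)
    moreover have "x - h = norm x *\<^sub>R (u + (norm h / norm x) *\<^sub>R z)"
      using \<open>x \<noteq> 0\<close> \<open>0 < norm h\<close> by (simp add: z_def u_def algebra_simps)
    ultimately show "norm x * (1 + a) < norm (x - h)"
      using \<open>x \<noteq> 0\<close> by simp
  qed
qed

lemma rho_bar_separated_midpoints:
  fixes y y' :: "'a::real_normed_vector"
  assumes inf: "infinite_dimensional TYPE('a)" and less: "rho_bar TYPE('a) t < a"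
    and "0 < t" "y \<noteq> y'"
  obtains P where "finite P" "card P = n"
    "\<And>p. p \<in> P \<Longrightarrow> norm (p - y) < dist y y' / 2 * (1 + a)"
    "\<And>p. p \<in> P \<Longrightarrow> norm (y' - p) < dist y y' / 2 * (1 + a)"
    "\<And>p q. p \<in> P \<Longrightarrow> q \<in> P \<Longrightarrow> p \<noteq> q \<Longrightarrow> dist y y' * t / 4 \<le> norm (p - q)"
proof -
  define r where "r = dist y y'"
  have r: "0 < r" using \<open>y \<noteq> y'\<close> by (simp add: r_def)
  define v where "v = inverse r *\<^sub>R (y' - y)"
  have v: "norm v = 1" using r by (simp add: v_def r_def dist_norm norm_minus_commute)
  obtain W where W: "fin_codim W" "\<And>w. w \<in> W \<Longrightarrow> norm w = 1 \<Longrightarrow> norm (v + t *\<^sub>R w) < 1 + a"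
    using rho_bar_witness[OF inf v less] by metis
  obtain \<Omega> where \<Omega>: "finite \<Omega>" "card \<Omega> = n" "\<Omega> \<subseteq> W \<inter> sphere 0 1"
    and sep: "\<forall>\<omega>\<in>\<Omega>. \<forall>\<omega>'\<in>\<Omega>. \<omega> \<noteq> \<omega>' \<longrightarrow> 1/2 \<le> norm (\<omega> - \<omega>')"
    using fin_codim_separated_unit_vectors[OF inf W(1)] by metis
  define p where "p \<omega> = y + (r / 2) *\<^sub>R (v + t *\<^sub>R \<omega>)" for \<omega>
  have p_diff: "p \<omega> - p \<omega>' = (r * t / 2) *\<^sub>R (\<omega> - \<omega>')" for \<omega> \<omega>'
    by (simp add: p_def algebra_simps)
  have "inj_on p \<Omega>"
  proof (rule inj_onI)
    fix \<omega> \<omega>' assume "\<omega> \<in> \<Omega>" "\<omega>' \<in> \<Omega>" "p \<omega> = p \<omega>'"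
    then show "\<omega> = \<omega>'" using p_diff[of \<omega> \<omega>'] r \<open>0 < t\<close> by simp
  qed
  show thesis
  proof (rule that[of "p ` \<Omega>"], fold r_def)
    show "finite (p ` \<Omega>)" "card (p ` \<Omega>) = n" using \<Omega> \<open>inj_on p \<Omega>\<close> by (simp_all add: card_image)
  next
    fix q assume "q \<in> p ` \<Omega>"
    then obtain \<omega> where "\<omega> \<in> \<Omega>" "q = p \<omega>" by blast
    then have \<omega>: "\<omega> \<in> W" "norm \<omega> = 1" "q = p \<omega>" using \<Omega>(3) by auto
    have "- \<omega> \<in> W" using subspace_neg[OF fin_codim_subspace[OF W(1)] \<omega>(1)] .
    have "y' - y = r *\<^sub>R v" using r by (simp add: v_def)
    then have "y' - q = (r / 2) *\<^sub>R (v + t *\<^sub>R (- \<omega>))"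
      by (simp add: \<omega>(3) p_def algebra_simps flip: scaleR_add_left)
    then show "norm (y' - q) < r / 2 * (1 + a)"
      using W(2)[OF \<open>- \<omega> \<in> W\<close>] \<omega>(2) r by simp
    show "norm (q - y) < r / 2 * (1 + a)"
      using W(2)[OF \<omega>(1,2)] r by (simp add: \<omega>(3) p_def)
  next
    fix q q' assume "q \<in> p ` \<Omega>" "q' \<in> p ` \<Omega>" "q \<noteq> q'"
    then obtain \<omega> \<omega>' where "\<omega> \<in> \<Omega>" "\<omega>' \<in> \<Omega>" "\<omega> \<noteq> \<omega>'" "q = p \<omega>" "q' = p \<omega>'" by auto
    then have "norm (q - q') = r * t / 2 * norm (\<omega> - \<omega>')" and "1/2 \<le> norm (\<omega> - \<omega>')"
      using p_diff r \<open>0 < t\<close> sep by auto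
    moreover have "0 < r * t / 2" using r \<open>0 < t\<close> by simp
    ultimately show "r * t / 4 \<le> norm (q - q')"
      using mult_left_mono[of "1/2" "norm (\<omega> - \<omega>')" "r * t / 2"] by simp
  qed
qed

section \<open>Coarse constants\<close>

lemma Lip_inf_lessE:
  assumes "Lip_inf S f < ereal L"
  obtains s where "0 < s"
    "\<And>x x'. x \<in> S \<Longrightarrow> x' \<in> S \<Longrightarrow> s \<le> norm (x - x') \<Longrightarrow> norm (f x - f x') \<le> L * norm (x - x')"
proof -
  obtain s where s: "0 < s" "Lip_s S f s < ereal L"
    using assms unfolding Lip_inf_def by (auto simp: INF_less_iff)
  show thesis
  proof (rule that[OF s(1)])
    fix x x' assume xx': "x \<in> S" "x' \<in> S" "s \<le> norm (x - x')"
    then have "ereal (norm (f x - f x') / norm (x - x')) \<le> Lip_s S f s"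
      unfolding Lip_s_def by (intro Sup_upper) blast
    then have "ereal (norm (f x - f x') / norm (x - x')) < ereal L" using s(2) by (rule le_less_trans)
    then have "norm (f x - f x') / norm (x - x') < L" by simp
    moreover have "0 < norm (x - x')" using xx'(3) s(1) by linarith
    ultimately show "norm (f x - f x') \<le> L * norm (x - x')" by (simp add: divide_less_eq less_imp_le)
  qed
qed

lemma Lip_inf_real_nonneg:
  assumes "Lip_inf S f = ereal l"
  shows "0 \<le> l"
proof (rule ccontr)
  assume "\<not> 0 \<le> l"
  then have "Lip_inf S f < 0" using assms by simp
  then obtain s where s: "0 < s" "Lip_s S f s < 0"
    unfolding Lip_inf_def by (auto simp: INF_less_iff)
  let ?A = "{ereal (norm (f x - f y) / norm (x - y)) |x y. x \<in> S \<and> y \<in> S \<and> s \<le> norm (x - y)}"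
  have "?A = {}"
  proof (rule ccontr)
    assume "?A \<noteq> {}"
    then obtain a where "a \<in> ?A" by blast
    then have "0 \<le> a" "a \<le> Sup ?A" by (auto intro: Sup_upper)
    then show False using s(2) unfolding Lip_s_def by simp
  qed
  then have "Lip_s S f s = -\<infinity>" unfolding Lip_s_def by (metis Sup_empty bot_ereal_def)
  then have "Lip_inf S f = -\<infinity>"
    unfolding Lip_inf_def using s(1) by (metis INF_lower greaterThan_iff ereal_infty_less_eq(2))
  then show False using assms by simp
qed

lemma c_inf_nonneg: "0 \<le> c_inf S f K"
  unfolding c_inf_def c_d_def by (intro INF_greatest Inf_greatest) auto

lemma c_inf_lessE:
  assumes "c_inf S f K < ereal c" "0 \<le> K"
  obtains d where "K < d" "\<And>x r y. x \<in> S \<Longrightarrow> d \<le> r \<Longrightarrow> norm (y - f x) \<le> r \<Longrightarrow>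
      \<exists>q\<in>S. norm (q - x) \<le> c * r \<and> norm (f q - y) \<le> K"
proof -
  obtain d where d: "K < d" "c_d S f K d < ereal c"
    using assms(1) unfolding c_inf_def by (auto simp: INF_less_iff)
  then obtain c0 where c0: "c0 < c"
    "\<And>x r. x \<in> S \<Longrightarrow> d \<le> r \<Longrightarrow> cball (f x) r \<subseteq> nbhd (f ` (S \<inter> cball x (c0 * r))) K"
    unfolding c_d_def by (auto simp: Inf_less_iff)
  show thesis
  proof (rule that[OF d(1)])
    fix x r y assume xr: "x \<in> S" "d \<le> r" "norm (y - f x) \<le> r"
    then have "y \<in> cball (f x) r" by (simp add: dist_norm norm_minus_commute)
    then have "y \<in> nbhd (f ` (S \<inter> cball x (c0 * r))) K" using c0(2)[OF xr(1,2)] by blast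
    then obtain q where q: "q \<in> S" "dist x q \<le> c0 * r" "norm (y - f q) \<le> K"
      unfolding nbhd_def by auto
    have "c0 * r \<le> c * r" using c0(1) xr(2) d(1) assms(2) by (intro mult_right_mono) auto
    then show "\<exists>q\<in>S. norm (q - x) \<le> c * r \<and> norm (f q - y) \<le> K"
      using q by (intro bexI[OF _ q(1)]) (auto simp: dist_norm norm_minus_commute)
  qed
qed

lemma c_inf_le:
  assumes "0 < c" "K < D"
    and "\<And>x r. x \<in> S \<Longrightarrow> D \<le> r \<Longrightarrow> cball (f x) r \<subseteq> nbhd (f ` (S \<inter> cball x (c * r))) K"
  shows "c_inf S f K \<le> ereal c"
proof -
  have "c_d S f K D \<le> ereal c" unfolding c_d_def by (rule Inf_lower) (use assms in blast)
  moreover have "c_inf S f K \<le> c_d S f K D"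
    unfolding c_inf_def by (rule INF_lower) (use assms(2) in simp)
  ultimately show ?thesis by simp
qed

lemma coarsely_continuous_onE:
  assumes "coarsely_continuous_on S h" "0 < t"
  obtains B where "\<And>x y. x \<in> S \<Longrightarrow> y \<in> S \<Longrightarrow> dist x y \<le> t \<Longrightarrow> dist (h x) (h y) \<le> B"
proof -
  have "bdd_above {dist (h x) (h y) |x y. x \<in> S \<and> y \<in> S \<and> dist x y \<le> t}"
    using assms unfolding coarsely_continuous_on_def by simp
  then obtain B where "\<And>z. z \<in> {dist (h x) (h y) |x y. x \<in> S \<and> y \<in> S \<and> dist x y \<le> t} \<Longrightarrow> z \<le> B"
    unfolding bdd_above_def by auto
  then show thesis by (intro that[of B]) auto
qed

lemma coarse_inverse_fibres_bounded:
  assumes "coarsely_continuous_on UNIV g" "bdd_above {norm (g (f x) - x) |x. x \<in> S}" "0 < R"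
  obtains E where "\<And>x x'. x \<in> S \<Longrightarrow> x' \<in> S \<Longrightarrow> dist (f x) (f x') \<le> R \<Longrightarrow> norm (x - x') \<le> E"
proof -
  obtain C where C: "\<And>x. x \<in> S \<Longrightarrow> norm (g (f x) - x) \<le> C"
    using assms(2) unfolding bdd_above_def by auto
  obtain Bg where Bg: "\<And>y y'. dist y y' \<le> R \<Longrightarrow> dist (g y) (g y') \<le> Bg"
    using coarsely_continuous_onE[OF assms(1,3)] by (metis UNIV_I)
  show thesis
  proof (rule that[of "2 * C + Bg"])
    fix x x' assume x: "x \<in> S" "x' \<in> S" "dist (f x) (f x') \<le> R"
    have "x - x' = (g (f x') - x') - (g (f x) - x) + (g (f x) - g (f x'))" by simp
    then have "norm (x - x') \<le> norm (g (f x') - x') + norm (g (f x) - x) + norm (g (f x) - g (f x'))"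
      using norm_triangle_ineq[of "(g (f x') - x') - (g (f x) - x)" "g (f x) - g (f x')"]
        norm_triangle_ineq4[of "g (f x') - x'" "g (f x) - x"] by simp
    then show "norm (x - x') \<le> 2 * C + Bg"
      using C[OF x(1)] C[OF x(2)] Bg[OF x(3)] by (simp add: dist_norm)
  qed
qed

lemma real_of_ereal_mult_nonzero:
  assumes "real_of_ereal (a * b) \<noteq> 0"
  obtains x y where "a = ereal x" "b = ereal y"
  using assms by (cases a; cases b) (auto split: if_splits)

lemma Lip_inf_c_inf_finite:
  assumes "real_of_ereal (56 * Lip_inf S f * c_inf S f K) \<noteq> 0"
  obtains l c where "Lip_inf S f = ereal l" "c_inf S f K = ereal c" "0 < l" "0 < c"
proof -
  obtain l' c where c: "56 * Lip_inf S f = ereal l'" "c_inf S f K = ereal c"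
    using real_of_ereal_mult_nonzero[OF assms] by metis
  obtain l where l: "Lip_inf S f = ereal l" using c(1) by (cases "Lip_inf S f") auto
  have "l \<noteq> 0" "c \<noteq> 0" using assms l c(2) by auto
  moreover have "0 \<le> l" using Lip_inf_real_nonneg[OF l] .
  moreover have "0 \<le> c" using c_inf_nonneg[of S f K] c(2) by simp
  ultimately show thesis using that l c(2) by simp
qed

lemma eventually_linear_less_at_top:
  fixes \<beta> \<gamma> \<alpha> :: real
  assumes "\<beta> < \<gamma>"
  shows "eventually (\<lambda>r. \<alpha> + \<beta> * r < \<gamma> * r) at_top"
  using eventually_gt_at_top[of "\<alpha> / (\<gamma> - \<beta>)"]
  by eventually_elim (use assms in \<open>simp add: field_simps\<close>)

section \<open>The large-scale argument\<close>

text \<open>\<open>L\<close> and \<open>c\<close> play the roles of numbers above \<open>Lip_inf S f\<close> and \<open>c_inf S f K\<close>; the bound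
  \<open>E\<close> on approximate fibres comes from the coarse inverse.\<close>

locale coarse_Lipschitz_quotient =
  fixes S :: "'a::real_normed_vector set" and f :: "'a \<Rightarrow> 'b::real_normed_vector"
    and K E s B L c d :: real
  assumes K_nonneg: "0 \<le> K" and d_nonneg: "0 \<le> d"
    and s_pos: "0 < s" and L_pos: "0 < L" and c_pos: "0 < c"
    and Lipschitz_large:
      "\<And>x x'. x \<in> S \<Longrightarrow> x' \<in> S \<Longrightarrow> s \<le> norm (x - x') \<Longrightarrow> norm (f x - f x') \<le> L * norm (x - x')"
    and bounded_small:
      "\<And>x x'. x \<in> S \<Longrightarrow> x' \<in> S \<Longrightarrow> norm (x - x') \<le> s \<Longrightarrow> norm (f x - f x') \<le> B"
    and co_Lipschitz:
      "\<And>x r y. x \<in> S \<Longrightarrow> d \<le> r \<Longrightarrow> norm (y - f x) \<le> r \<Longrightarrow>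
         \<exists>q\<in>S. norm (q - x) \<le> c * r \<and> norm (f q - y) \<le> K"
    and fibres_bounded:
      "\<And>x x' y. x \<in> S \<Longrightarrow> x' \<in> S \<Longrightarrow> norm (f x - y) \<le> K \<Longrightarrow> norm (f x' - y) \<le> K \<Longrightarrow>
         norm (x - x') \<le> E"
begin

lemma B_nonneg: "x \<in> S \<Longrightarrow> 0 \<le> B"
  using bounded_small[of x x] s_pos by simp

lemma E_nonneg: "x \<in> S \<Longrightarrow> 0 \<le> E"
  using fibres_bounded[of x x "f x"] K_nonneg by simp

lemma Lipschitz_if_images_far:
  assumes "x \<in> S" "x' \<in> S" "B < norm (f x - f x')"
  shows "norm (f x - f x') \<le> L * norm (x - x')"
proof (rule Lipschitz_large[OF assms(1,2)])
  show "s \<le> norm (x - x')" using bounded_small[OF assms(1,2)] assms(3) by fastforce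
qed

lemma preimage_near_two_points:
  assumes x: "x \<in> S" and w: "w \<in> S" "norm (f w - y) \<le> K"
    and p: "norm (p - f x) \<le> \<rho>" "norm (y - p) \<le> \<rho>" and "0 \<le> \<rho>"
  obtains q where "q \<in> S" "norm (q - x) \<le> c * (\<rho> + K + d) + E"
    "norm (q - w) \<le> c * (\<rho> + K + d) + E" "norm (f q - p) \<le> K"
proof -
  obtain q where q: "q \<in> S" "norm (q - x) \<le> c * (\<rho> + d)" "norm (f q - p) \<le> K"
    using co_Lipschitz[OF x, of "\<rho> + d" p] p(1) \<open>0 \<le> \<rho>\<close> d_nonneg by auto
  have "norm (y - f q) \<le> \<rho> + K"
    using norm_triangle_ineq4[of "y - p" "f q - p"] p(2) q(3) by simp
  then obtain w' where w': "w' \<in> S" "norm (w' - q) \<le> c * (\<rho> + K + d)" "norm (f w' - y) \<le> K"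
    using co_Lipschitz[OF q(1), of "\<rho> + K + d" y] \<open>0 \<le> \<rho>\<close> K_nonneg d_nonneg by auto
  have "norm (w' - w) \<le> E" using fibres_bounded[OF w'(1) w(1) w'(3) w(2)] .
  then have "norm (q - w) \<le> c * (\<rho> + K + d) + E"
    using w'(2) norm_triangle_ineq4[of "w' - w" "w' - q"] by (simp add: norm_minus_commute)
  moreover have "norm (q - x) \<le> c * (\<rho> + K + d) + E"
    using q(2) c_pos K_nonneg E_nonneg[OF x] by (smt (verit) mult_left_mono)
  ultimately show thesis using that q(1,3) by blast
qed

lemma far_preimages_near_subspace:
  assumes inf: "infinite_dimensional TYPE('b)" and rho: "rho_bar TYPE('b) t < a" and "0 < t"
    and Z: "fin_codim Z" and x: "x \<in> S" and w: "w \<in> S" "norm (f w - y) \<le> K" and "f x \<noteq> y"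
  defines "M \<equiv> c * (dist (f x) y / 2 * (1 + a) + K + d) + E"
  obtains q1 q2 h where "q1 \<in> S" "q2 \<in> S" "h \<in> Z" "norm (q1 - x) \<le> M" "norm (q2 - w) \<le> M"
    "norm (q1 - q2 - h) < 1" "dist (f x) y * t / 4 - 2 * K \<le> norm (f q1 - f q2)"
proof -
  let ?\<rho> = "dist (f x) y / 2 * (1 + a)"
  have "0 \<le> ?\<rho>" using rho_bar_nonneg[OF inf, of t] rho by simp
  obtain N where N: "\<And>(P :: 'b set) q. finite P \<Longrightarrow> N < card P \<Longrightarrow> q ` P \<subseteq> cball 0 M \<Longrightarrow>
      \<exists>p1\<in>P. \<exists>p2\<in>P. p1 \<noteq> p2 \<and> infdist (q p1 - q p2) Z < 1"
    using fin_codim_pigeonhole[OF Z bounded_cball, of 1 0 M] by (metis zero_less_one)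
  obtain P where P: "finite P" "card P = Suc N"
    and near: "\<And>p. p \<in> P \<Longrightarrow> norm (p - f x) < ?\<rho>" "\<And>p. p \<in> P \<Longrightarrow> norm (y - p) < ?\<rho>"
    and sep: "\<And>p p'. p \<in> P \<Longrightarrow> p' \<in> P \<Longrightarrow> p \<noteq> p' \<Longrightarrow> dist (f x) y * t / 4 \<le> norm (p - p')"
    using rho_bar_separated_midpoints[OF inf rho \<open>0 < t\<close> \<open>f x \<noteq> y\<close>] by metis
  have "\<forall>p\<in>P. \<exists>q. q \<in> S \<and> norm (q - x) \<le> M \<and> norm (q - w) \<le> M \<and> norm (f q - p) \<le> K"
  proof
    fix p assume "p \<in> P"
    from preimage_near_two_points[OF x w, of p ?\<rho>] near[OF \<open>p \<in> P\<close>] \<open>0 \<le> ?\<rho>\<close>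
    show "\<exists>q. q \<in> S \<and> norm (q - x) \<le> M \<and> norm (q - w) \<le> M \<and> norm (f q - p) \<le> K"
      unfolding M_def by (metis less_imp_le)
  qed
  then obtain Q where Q: "\<And>p. p \<in> P \<Longrightarrow>
      Q p \<in> S \<and> norm (Q p - x) \<le> M \<and> norm (Q p - w) \<le> M \<and> norm (f (Q p) - p) \<le> K"
    by metis
  have "(\<lambda>p. Q p - x) ` P \<subseteq> cball 0 M" using Q by auto
  from N[OF P(1) _ this] P(2)
  obtain p1 p2 where p: "p1 \<in> P" "p2 \<in> P" "p1 \<noteq> p2" "infdist (Q p1 - Q p2) Z < 1"
    by auto
  have "Z \<noteq> {}" using subspace_0[OF fin_codim_subspace[OF Z]] by blast
  then obtain h where h: "h \<in> Z" "dist (Q p1 - Q p2) h < 1" by (rule infdist_ltE[OF _ p(4)])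
  have "p1 - p2 = (f (Q p1) - f (Q p2)) - (f (Q p1) - p1) + (f (Q p2) - p2)" by simp
  then have "norm (p1 - p2) \<le> norm (f (Q p1) - f (Q p2)) + norm (f (Q p1) - p1) + norm (f (Q p2) - p2)"
    using norm_triangle_ineq[of "f (Q p1) - f (Q p2) - (f (Q p1) - p1)" "f (Q p2) - p2"]
      norm_triangle_ineq4[of "f (Q p1) - f (Q p2)" "f (Q p1) - p1"] by simp
  moreover have "dist (f x) y * t / 4 \<le> norm (p1 - p2)" using sep p(1-3) .
  ultimately have "dist (f x) y * t / 4 - 2 * K \<le> norm (f (Q p1) - f (Q p2))"
    using Q[OF p(1)] Q[OF p(2)] by linarith
  then show thesis using that[of "Q p1" "Q p2" h] Q[OF p(1)] Q[OF p(2)] h by (simp add: dist_norm)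
qed

lemma approximate_preimage_close:
  assumes infX: "infinite_dimensional TYPE('a)" and infY: "infinite_dimensional TYPE('b)"
    and rho: "rho_bar TYPE('b) t < a_lo" and delta: "a_hi < delta_bar TYPE('a) \<tau>"
    and "0 \<le> a_hi" "0 < t" "0 < \<tau>"
    and x: "x \<in> S" and w: "w \<in> S" "norm (f w - y) \<le> K" and "x \<noteq> w"
    and far: "norm (x - w) \<le> c * (dist (f x) y + d)"
    and large: "B + 2 * K < dist (f x) y * t / 4"
      "\<tau> * c * (dist (f x) y + d) \<le> (dist (f x) y * t / 4 - 2 * K) / L - 1"
  shows "norm (x - w) * (1 + a_hi) < c * (dist (f x) y * (1 + a_lo) + 2 * K + 2 * d) + 2 * E + 1"
proof -
  let ?r = "dist (f x) y" and ?M = "c * (dist (f x) y / 2 * (1 + a_lo) + K + d) + E"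
  have "0 < ?r * t / 4" using large(1) B_nonneg[OF x] K_nonneg by linarith
  then have "f x \<noteq> y" by auto
  obtain Z where Z: "fin_codim Z"
    and convex: "\<And>h. h \<in> Z \<Longrightarrow> \<tau> * norm (x - w) \<le> norm h \<Longrightarrow> norm (x - w) * (1 + a_hi) < norm (x - w - h)"
    using delta_bar_far_translates[OF infX delta \<open>0 \<le> a_hi\<close> \<open>0 < \<tau>\<close>] \<open>x \<noteq> w\<close> by (metis right_minus_eq)
  obtain q1 q2 h where q: "q1 \<in> S" "q2 \<in> S" "h \<in> Z" "norm (q1 - x) \<le> ?M" "norm (q2 - w) \<le> ?M"
      "norm (q1 - q2 - h) < 1" "?r * t / 4 - 2 * K \<le> norm (f q1 - f q2)"
    using far_preimages_near_subspace[OF infY rho \<open>0 < t\<close> Z x w \<open>f x \<noteq> y\<close>] by metis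
  have "?r * t / 4 - 2 * K \<le> L * norm (q1 - q2)"
    using Lipschitz_if_images_far[OF q(1,2)] q(7) large(1) by linarith
  then have "(?r * t / 4 - 2 * K) / L \<le> norm (q1 - q2)"
    using L_pos by (simp add: divide_le_eq mult.commute)
  moreover have "norm (q1 - q2) < norm h + 1"
    using q(6) norm_triangle_ineq2[of "q1 - q2" h] by linarith
  moreover have "\<tau> * norm (x - w) \<le> \<tau> * c * (?r + d)"
    using far \<open>0 < \<tau>\<close> by (simp add: mult.assoc)
  ultimately have "norm (x - w) * (1 + a_hi) < norm (x - w - h)"
    using large(2) convex[OF q(3)] by linarith
  also have "x - w - h = (x - q1) + (q2 - w) + (q1 - q2 - h)" by simp
  also have "norm \<dots> \<le> norm (x - q1) + norm (q2 - w) + norm (q1 - q2 - h)"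
    using norm_triangle_ineq[of "(x - q1) + (q2 - w)" "q1 - q2 - h"]
      norm_triangle_ineq[of "x - q1" "q2 - w"] by linarith
  also have "\<dots> < 2 * ?M + 1" using q(4-6) by (simp add: norm_minus_commute)
  finally show ?thesis by (simp add: field_simps)
qed

lemma large_scale_inequalities:
  assumes "0 < t" and Lipschitz_gap: "\<tau> * c < t / (4 * L)"
    and convexity_gap: "c * (1 + a_lo) < c' * (1 + a_hi)"
  shows "eventually (\<lambda>r. B + 2 * K < r * t / 4 \<and> \<tau> * c * (r + d) \<le> (r * t / 4 - 2 * K) / L - 1 \<and>
      c * (r * (1 + a_lo) + 2 * K + 2 * d) + 2 * E + 1 < c' * r * (1 + a_hi)) at_top"
proof (intro eventually_conj)
  show "eventually (\<lambda>r. B + 2 * K < r * t / 4) at_top"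
    using eventually_linear_less_at_top[of 0 "t / 4" "B + 2 * K"] \<open>0 < t\<close>
    by (auto elim!: eventually_mono simp: field_simps)
  show "eventually (\<lambda>r. \<tau> * c * (r + d) \<le> (r * t / 4 - 2 * K) / L - 1) at_top"
    using eventually_linear_less_at_top[OF Lipschitz_gap, of "\<tau> * c * d + 2 * K / L + 1"]
  proof eventually_elim
    fix r assume "\<tau> * c * d + 2 * K / L + 1 + \<tau> * c * r < t / (4 * L) * r"
    moreover have "(r * t / 4 - 2 * K) / L = t / (4 * L) * r - 2 * K / L"
      using L_pos by (simp add: field_simps)
    ultimately show "\<tau> * c * (r + d) \<le> (r * t / 4 - 2 * K) / L - 1"
      by (simp add: algebra_simps)
  qed
  show "eventually (\<lambda>r. c * (r * (1 + a_lo) + 2 * K + 2 * d) + 2 * E + 1 < c' * r * (1 + a_hi)) at_top"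
    using eventually_linear_less_at_top[OF convexity_gap, of "c * (2 * K + 2 * d) + 2 * E + 1"]
    by eventually_elim (simp add: algebra_simps)
qed

lemma co_Lipschitz_constant_improves:
  assumes infX: "infinite_dimensional TYPE('a)" and infY: "infinite_dimensional TYPE('b)"
    and rho: "rho_bar TYPE('b) t < a_lo" and delta: "a_hi < delta_bar TYPE('a) \<tau>"
    and "0 \<le> a_hi" "0 < t" "0 < \<tau>" "0 < c'"
    and Lipschitz_gap: "\<tau> * c < t / (4 * L)"
    and convexity_gap: "c * (1 + a_lo) < c' * (1 + a_hi)"
  obtains R where "\<And>x r. x \<in> S \<Longrightarrow> R \<le> r \<Longrightarrow> cball (f x) r \<subseteq> nbhd (f ` (S \<inter> cball x (c' * r))) K"
proof -
  obtain R0 where R0: "\<And>r. R0 \<le> r \<Longrightarrow> B + 2 * K < r * t / 4 \<and>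
      \<tau> * c * (r + d) \<le> (r * t / 4 - 2 * K) / L - 1 \<and>
      c * (r * (1 + a_lo) + 2 * K + 2 * d) + 2 * E + 1 < c' * r * (1 + a_hi)"
    using large_scale_inequalities[OF \<open>0 < t\<close> Lipschitz_gap convexity_gap]
    unfolding eventually_at_top_linorder by blast
  show thesis
  proof (rule that[of "(R0 + d) * c / c'"], rule subsetI, rule ccontr)
    fix x r z assume x: "x \<in> S" and r: "(R0 + d) * c / c' \<le> r" and z: "z \<in> cball (f x) r"
      and "z \<notin> nbhd (f ` (S \<inter> cball x (c' * r))) K"
    then have outside: "K < norm (z - f q)" if "q \<in> S" "norm (q - x) \<le> c' * r" for q
      using that unfolding nbhd_def by (force simp: dist_norm norm_minus_commute)
    let ?r = "dist (f x) z"
    obtain w where w: "w \<in> S" "norm (w - x) \<le> c * (?r + d)" "norm (f w - z) \<le> K"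
      using co_Lipschitz[OF x, of "?r + d" z] d_nonneg by (auto simp: dist_norm norm_minus_commute)
    have "c' * r < norm (w - x)"
      using outside[OF w(1)] w(3) by (force simp: norm_minus_commute)
    have "?r \<le> r" using z by simp
    have "R0 \<le> ?r"
    proof -
      have "(R0 + d) * c \<le> c' * r" using r \<open>0 < c'\<close> by (simp add: field_simps)
      then have "(R0 + d) * c < c * (?r + d)" using \<open>c' * r < norm (w - x)\<close> w(2) by linarith
      then show ?thesis using c_pos by (simp add: algebra_simps)
    qed
    note large = R0[OF this]
    have "0 \<le> r" using \<open>?r \<le> r\<close> zero_le_dist[of "f x" z] by linarith
    then have "0 \<le> c' * r" using \<open>0 < c'\<close> by simp
    then have "x \<noteq> w" using \<open>c' * r < norm (w - x)\<close> by auto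
    have "norm (x - w) * (1 + a_hi) < c' * ?r * (1 + a_hi)"
      using approximate_preimage_close[OF infX infY rho delta \<open>0 \<le> a_hi\<close> \<open>0 < t\<close> \<open>0 < \<tau>\<close> x w(1,3)
          \<open>x \<noteq> w\<close>] w(2) large
      by (simp add: norm_minus_commute)
    also have "\<dots> \<le> c' * r * (1 + a_hi)"
      using \<open>?r \<le> r\<close> \<open>0 < c'\<close> \<open>0 \<le> a_hi\<close> by (intro mult_right_mono) auto
    also have "\<dots> < norm (x - w) * (1 + a_hi)"
      using \<open>c' * r < norm (w - x)\<close> \<open>0 \<le> a_hi\<close> by (simp add: norm_minus_commute)
    finally have "norm (x - w) * (1 + a_hi) < norm (x - w) * (1 + a_hi)" .
    then show False by simp
  qed
qed

end

lemma coarse_Lipschitz_quotientI: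
  fixes S :: "'a::real_normed_vector set" and f :: "'a \<Rightarrow> 'b::real_normed_vector"
  assumes "coarsely_continuous_on S f" "coarsely_continuous_on UNIV g"
    and "bdd_above {norm (g (f x) - x) |x. x \<in> S}" "0 \<le> K"
    and "Lip_inf S f < ereal L" "0 < L" "c_inf S f K < ereal c" "0 < c"
  obtains E s B d where "coarse_Lipschitz_quotient S f K E s B L c d"
proof -
  obtain s where s: "0 < s"
    "\<And>x x'. x \<in> S \<Longrightarrow> x' \<in> S \<Longrightarrow> s \<le> norm (x - x') \<Longrightarrow> norm (f x - f x') \<le> L * norm (x - x')"
    using Lip_inf_lessE[OF assms(5)] by metis
  obtain B where B: "\<And>x x'. x \<in> S \<Longrightarrow> x' \<in> S \<Longrightarrow> dist x x' \<le> s \<Longrightarrow> dist (f x) (f x') \<le> B"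
    using coarsely_continuous_onE[OF assms(1) s(1)] by metis
  obtain d where d: "K < d" "\<And>x r y. x \<in> S \<Longrightarrow> d \<le> r \<Longrightarrow> norm (y - f x) \<le> r \<Longrightarrow>
      \<exists>q\<in>S. norm (q - x) \<le> c * r \<and> norm (f q - y) \<le> K"
    using c_inf_lessE[OF assms(7,4)] by metis
  have "0 < 2 * K + 1" using assms(4) by simp
  then obtain E where E: "\<And>x x'. x \<in> S \<Longrightarrow> x' \<in> S \<Longrightarrow> dist (f x) (f x') \<le> 2 * K + 1 \<Longrightarrow>
      norm (x - x') \<le> E"
    using coarse_inverse_fibres_bounded[OF assms(2,3)] by metis
  have "coarse_Lipschitz_quotient S f K E s B L c d"
  proof
    fix x x' y assume "x \<in> S" "x' \<in> S" "norm (f x - y) \<le> K" "norm (f x' - y) \<le> K"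
    moreover have "norm (f x - f x') \<le> norm (f x - y) + norm (f x' - y)"
      using norm_triangle_ineq4[of "f x - y" "f x' - y"] by simp
    ultimately show "norm (x - x') \<le> E" using E by (simp add: dist_norm)
  qed (use s B d assms(4,6,8) in \<open>auto simp: dist_norm\<close>)
  then show thesis by (rule that)
qed

text \<open>Only \<open>4 (1 + \<eta>)\<^sup>2 < 56\<close> is used, so the constant 56 leaves much room.\<close>

lemma perturbation_preserves_gaps:
  fixes l c t a_lo a_hi :: real
  assumes "0 < l" "0 < c" "0 < t" "0 \<le> a_lo" "a_lo < a_hi"
  obtains \<eta> where "0 < \<eta>" "\<eta> < 1"
    "t / (56 * l * c) * (c * (1 + \<eta>)) < t / (4 * (l * (1 + \<eta>)))"
    "c * (1 + \<eta>) * (1 + a_lo) < c * (1 - \<eta>) * (1 + a_hi)"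
proof -
  define \<eta> where "\<eta> = (a_hi - a_lo) / (2 * (2 + a_hi + a_lo))"
  have pos: "0 < 2 + a_hi + a_lo" using assms by simp
  have "0 < \<eta>" unfolding \<eta>_def using assms pos by simp
  have "\<eta> < 1/2" unfolding \<eta>_def using assms pos by (simp add: divide_less_eq)
  have "t / (56 * l * c) * (c * (1 + \<eta>)) < t / (4 * (l * (1 + \<eta>)))"
  proof -
    have "(1 + \<eta>) * (1 + \<eta>) < 2 * 2"
      using \<open>0 < \<eta>\<close> \<open>\<eta> < 1/2\<close> by (intro mult_strict_mono) auto
    then have "(1 + \<eta>) / 56 < 1 / (4 * (1 + \<eta>))" using \<open>0 < \<eta>\<close> by (simp add: field_simps)
    then have "t / l * ((1 + \<eta>) / 56) < t / l * (1 / (4 * (1 + \<eta>)))"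
      using assms by (intro mult_strict_left_mono) auto
    moreover have "t / (56 * l * c) * (c * (1 + \<eta>)) = t / l * ((1 + \<eta>) / 56)"
      using assms by simp
    moreover have "t / (4 * (l * (1 + \<eta>))) = t / l * (1 / (4 * (1 + \<eta>)))"
      by simp
    ultimately show ?thesis by linarith
  qed
  moreover have "c * (1 + \<eta>) * (1 + a_lo) < c * (1 - \<eta>) * (1 + a_hi)"
  proof -
    have "\<eta> * (2 + a_hi + a_lo) = (a_hi - a_lo) / 2" unfolding \<eta>_def using pos by (simp add: field_simps)
    then have "(1 + \<eta>) * (1 + a_lo) < (1 - \<eta>) * (1 + a_hi)" using assms by (simp add: algebra_simps)
    then show ?thesis using \<open>0 < c\<close> by (simp add: mult.assoc)
  qed
  ultimately show thesis using that \<open>0 < \<eta>\<close> \<open>\<eta> < 1/2\<close> by simp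
qed

lemma delta_bar_le_rho_bar_finite_constants:
  fixes S :: "'a::real_normed_vector set" and f :: "'a \<Rightarrow> 'b::real_normed_vector"
  assumes infX: "infinite_dimensional TYPE('a)" and infY: "infinite_dimensional TYPE('b)"
    and coarse: "coarsely_continuous_on S f" "coarsely_continuous_on UNIV g"
      "bdd_above {norm (g (f x) - x) |x. x \<in> S}" "0 \<le> K"
    and lc: "Lip_inf S f = ereal l" "c_inf S f K = ereal c" "0 < l" "0 < c" and "0 < t"
  shows "delta_bar TYPE('a) (t / (56 * l * c)) \<le> rho_bar TYPE('b) t"
proof (rule ccontr)
  let ?\<tau> = "t / (56 * l * c)"
  let ?\<rho> = "rho_bar TYPE('b) t" and ?\<delta> = "delta_bar TYPE('a) ?\<tau>"
  assume "\<not> ?\<delta> \<le> ?\<rho>"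
  define a_lo where "a_lo = (2 * ?\<rho> + ?\<delta>) / 3"
  define a_hi where "a_hi = (?\<rho> + 2 * ?\<delta>) / 3"
  have a: "?\<rho> < a_lo" "a_hi < ?\<delta>" "a_lo < a_hi" "0 \<le> a_lo"
    using \<open>\<not> ?\<delta> \<le> ?\<rho>\<close> rho_bar_nonneg[OF infY, of t] by (simp_all add: a_lo_def a_hi_def)
  obtain \<eta> where \<eta>: "0 < \<eta>" "\<eta> < 1"
    "?\<tau> * (c * (1 + \<eta>)) < t / (4 * (l * (1 + \<eta>)))"
    "c * (1 + \<eta>) * (1 + a_lo) < c * (1 - \<eta>) * (1 + a_hi)"
    using perturbation_preserves_gaps[OF lc(3,4) \<open>0 < t\<close> a(4,3)] by metis
  have "Lip_inf S f < ereal (l * (1 + \<eta>))" "0 < l * (1 + \<eta>)"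
    "c_inf S f K < ereal (c * (1 + \<eta>))" "0 < c * (1 + \<eta>)"
    using lc \<eta>(1) by auto
  then obtain E s B d where "coarse_Lipschitz_quotient S f K E s B (l * (1 + \<eta>)) (c * (1 + \<eta>)) d"
    by (rule coarse_Lipschitz_quotientI[OF coarse])
  moreover have "0 \<le> a_hi" "0 < ?\<tau>" "0 < c * (1 - \<eta>)" using a lc \<eta>(2) \<open>0 < t\<close> by auto
  ultimately obtain R where R: "\<And>x r. x \<in> S \<Longrightarrow> R \<le> r \<Longrightarrow>
      cball (f x) r \<subseteq> nbhd (f ` (S \<inter> cball x (c * (1 - \<eta>) * r))) K"
    using coarse_Lipschitz_quotient.co_Lipschitz_constant_improves
        [OF _ infX infY a(1,2) _ \<open>0 < t\<close> _ _ \<eta>(3,4)]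
    by metis
  have "c_inf S f K \<le> ereal (c * (1 - \<eta>))"
    by (rule c_inf_le[where D = "max R (K + 1)"]) (use R lc(4) \<eta>(2) in auto)
  then show False using lc(2,4) \<eta>(1) by simp
qed

theorem theorem4p5:
  fixes S :: "'a::banach set" and f :: "'a \<Rightarrow> 'b::banach" and g :: "'b \<Rightarrow> 'a" and K :: real
  assumes "infinite_dimensional TYPE('a)" and "infinite_dimensional TYPE('b)"
    and "coarsely_continuous_on S f"
    and "coarse_Lipschitz_on S f"
    and "g ` UNIV \<subseteq> S"
    and "coarsely_continuous_on UNIV g"
    and "bdd_above {norm (g (f x) - x) |x. x \<in> S}"
    and "bdd_above (range (\<lambda>y. norm (f (g y) - y)))"
    and "K = (SUP y. norm (f (g y) - y))"
  shows "\<forall>t. 0 < t \<and> t \<le> 1 \<longrightarrow>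
    delta_bar TYPE('a) (t / real_of_ereal (56 * Lip_inf S f * c_inf S f K)) \<le> rho_bar TYPE('b) t"
proof (intro allI impI)
  fix t :: real assume "0 < t \<and> t \<le> 1"
  have "0 \<le> K" using assms(8,9) by (metis cSUP_upper UNIV_I norm_ge_zero order_trans)
  show "delta_bar TYPE('a) (t / real_of_ereal (56 * Lip_inf S f * c_inf S f K)) \<le> rho_bar TYPE('b) t"
  proof (cases "real_of_ereal (56 * Lip_inf S f * c_inf S f K) = 0")
    case True
    then have "t / real_of_ereal (56 * Lip_inf S f * c_inf S f K) = 0" by (simp only: div_by_0)
    then show ?thesis
      using delta_bar_zero_nonpos[OF assms(1)] rho_bar_nonneg[OF assms(2), of t] by (metis order_trans)
  next
    case False
    then obtain l c where "Lip_inf S f = ereal l" "c_inf S f K = ereal c" "0 < l" "0 < c"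
      by (rule Lip_inf_c_inf_finite)
    with delta_bar_le_rho_bar_finite_constants[OF assms(1,2,3,6,7) \<open>0 \<le> K\<close>] \<open>0 < t \<and> t \<le> 1\<close>
    show ?thesis by simp
  qed
qed

end
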